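(* For every realization of $X$ and every $\alpha\in(\underline{h},\infty)$, $L_\alpha=\widetilde L_\alpha\cup\Theta$.
   Context: Let $\mathbb{T}=\mathbb{R}/\mathbb{Z}$ with canonical surjection $\phi:\mathbb{R}\to\mathbb{T}$ and quotient distance $d$. Let $\mathcal{U}=\{\varnothing\}\cup\bigcup_{j\ge1}\{0,1\}^j$ be the set of finite words over $\{0,1\}$; for $u=u_1\dots u_j$ write $|u|=j$ ($|\varnothing|=0$), $\pi(u)=u_1\dots u_{j-1}$ for $j\ge1$, $\mathcal{U}^*=\mathcal{U}\setminus\{\varnothing\}$, and $u\mathcal{U}$ for the words $uw$, $w\in\mathcal{U}$. Put $x_u=\phi(\sum_{j=1}^{|u|}u_j2^{-j})$. Let $X=(X_u)_{u\in\mathcal{U}}$ be a $\{0,1\}$-valued family and $\underline{h}>0$. $S=\{u\in\mathcal{U}:X_u=1\}$; $\widetilde S=\{u\in\mathcal{U}^*:X_u=1,X_{\pi(u)}=0\}$; for $\alpha>\underline{h}$, $L_\alpha=\{x\in\mathbb{T}:d(x,x_u)<2^{-\underline{h}|u|/\alpha}\text{ for infinitely many }u\in S\}$ and $\widetilde L_\alpha$ is defined likewise with $\widetilde S$ in place of $S$. For $u\in\mathcal{U}$, $\tau_u=\{v\in u\mathcal{U}:X_{v_1\dots v_j}=1\text{ for all }j\in\{|u|,\dots,|v|\}\}$ and $\partial\tau_u=\{\zeta\in\{0,1\}^{\mathbb{N}}:\zeta_1\dots\zeta_j\in\tau_u\text{ for all }j\ge|u|\}$; $\dot x_\zeta=\sum_{j\ge1}\zeta_j2^{-j}$;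 $\Theta=\phi\big(\{\dot x_\zeta:u\in\mathcal{U},\zeta\in\partial\tau_u\}\big)$. *)

theory Defs
  imports "HOL-Analysis.Analysis"
begin

(* The torus T = R/Z is represented by the fundamental domain [0,1);
   the canonical surjection phi is frac. *)
definition torus :: "real set" where
  "torus = {0..<1}"

definition phi :: "real \<Rightarrow> real" where
  "phi x = frac x"

definition tdist :: "real \<Rightarrow> real \<Rightarrow> real" where
  "tdist x y = \<bar>(x - y) - of_int (round (x - y))\<bar>"

(* finite words over {0,1}: bool lists, True = 1; u ! (j-1) is the letter u_j *)
type_synonym word = "bool list"

definition parent :: "word \<Rightarrow> word" where
  "parent u = butlast u"

definition xw :: "word \<Rightarrow> real" where
  "xw u = phi (\<Sum>j<length u. of_bool (u ! j) * (1/2) ^ (j + 1))"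

definition Sset :: "(word \<Rightarrow> bool) \<Rightarrow> word set" where
  "Sset X = {u. X u}"

definition Stilde :: "(word \<Rightarrow> bool) \<Rightarrow> word set" where
  "Stilde X = {u. u \<noteq> [] \<and> X u \<and> \<not> X (parent u)}"

definition Lset :: "word set \<Rightarrow> real \<Rightarrow> real \<Rightarrow> real set" where
  "Lset A h \<alpha> = {x \<in> torus.
      infinite {u \<in> A. tdist x (xw u) < 2 powr (- (h * real (length u) / \<alpha>))}}"

definition L_alpha :: "(word \<Rightarrow> bool) \<Rightarrow> real \<Rightarrow> real \<Rightarrow> real set" where
  "L_alpha X h \<alpha> = Lset (Sset X) h \<alpha>"

definition Ltilde_alpha :: "(word \<Rightarrow> bool) \<Rightarrow> real \<Rightarrow> real \<Rightarrow> real set" where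
  "Ltilde_alpha X h \<alpha> = Lset (Stilde X) h \<alpha>"

definition tau :: "(word \<Rightarrow> bool) \<Rightarrow> word \<Rightarrow> word set" where
  "tau X u = {v. take (length u) v = u \<and> length u \<le> length v \<and> (\<forall>j. length u \<le> j \<and> j \<le> length v \<longrightarrow> X (take j v))}"

(* infinite words zeta : nat => bool, zeta n is the letter zeta_(n+1) *)
definition boundary_tau :: "(word \<Rightarrow> bool) \<Rightarrow> word \<Rightarrow> (nat \<Rightarrow> bool) set" where
  "boundary_tau X u = {\<zeta>. \<forall>j \<ge> length u. map \<zeta> [0..<j] \<in> tau X u}"

definition xdot :: "(nat \<Rightarrow> bool) \<Rightarrow> real" where
  "xdot \<zeta> = (\<Sum>j. of_bool (\<zeta> j) * (1/2) ^ (j + 1))"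

definition Theta :: "(word \<Rightarrow> bool) \<Rightarrow> real set" where
  "Theta X = phi ` {xdot \<zeta> | u \<zeta>. \<zeta> \<in> boundary_tau X u}"

end

theory Submission
  imports Defs
begin

(* Proof of L_alpha = Ltilde_alpha \<union> Theta, with c = h/alpha \<in> (0,1) and radius
   r(n) = 2^(-c n) (so 2^(-n) < r(n) for n \<ge> 1 and r(n+1) + 2^(-n) \<le> r(n) eventually).
   The inclusion Ltilde \<subseteq> L is immediate since Stilde \<subseteq> S.  For Theta \<subseteq> L, every long
   prefix of a branch zeta of some tau_u lies in S and its dyadic point is within 2^(-n)
   of xdot zeta.  For L \<subseteq> Ltilde \<union> Theta, take x close to infinitely many u \<in> S and cut
   each u at its stem: the shortest prefix s such that X = 1 on all prefixes between s
   and u.  A nonempty stem lies in Stilde and, being a prefix of u, is still close to x.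
   If infinitely many stems occur, x \<in> Ltilde.  Otherwise one stem v carries infinitely
   many u, all in tau_v; Koenig's lemma yields an infinite branch zeta of tau_v, and
   x = phi(xdot zeta) because x is arbitrarily close to the prefixes of zeta. *)

section \<open>The quotient distance on the torus\<close>

lemma tdist_le_shift: "tdist x y \<le> \<bar>x - y - of_int k\<bar>"
  unfolding tdist_def by (rule round_diff_minimal)

lemma tdist_nonneg: "0 \<le> tdist x y"
  unfolding tdist_def by simp

lemma tdist_le_abs: "tdist x y \<le> \<bar>x - y\<bar>"
  using tdist_le_shift[of x y 0] by simp

lemma tdist_triangle: "tdist x z \<le> tdist x y + tdist y z"
proof -
  have "tdist x z \<le> \<bar>x - z - of_int (round (x - y) + round (y - z))\<bar>"
    by (rule tdist_le_shift)
  also have "\<dots> \<le> tdist x y + tdist y z"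
    unfolding tdist_def by simp
  finally show ?thesis .
qed

lemma tdist_int_shift_right: "tdist x (y + of_int m) = tdist x y"
proof (rule antisym)
  show "tdist x (y + of_int m) \<le> tdist x y"
    using tdist_le_shift[of x "y + of_int m" "round (x - y) - m"]
    unfolding tdist_def by (simp add: algebra_simps)
  show "tdist x y \<le> tdist x (y + of_int m)"
    using tdist_le_shift[of x y "round (x - (y + of_int m)) + m"]
    unfolding tdist_def by (simp add: algebra_simps)
qed

lemma tdist_sym: "tdist x y = tdist y x"
proof (rule antisym)
  show "tdist x y \<le> tdist y x"
    using tdist_le_shift[of x y "- round (y - x)"] unfolding tdist_def by (simp add: abs_minus_commute)
  show "tdist y x \<le> tdist x y"
    using tdist_le_shift[of y x "- round (x - y)"] unfolding tdist_def by (simp add: abs_minus_commute)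
qed

lemma phi_as_shift: "phi y = y + of_int (- \<lfloor>y\<rfloor>)"
  unfolding phi_def frac_def by simp

lemma tdist_phi_right [simp]: "tdist x (phi y) = tdist x y"
  unfolding phi_as_shift by (rule tdist_int_shift_right)

lemma tdist_phi_left [simp]: "tdist (phi x) y = tdist x y"
  by (metis tdist_phi_right tdist_sym)

lemma phi_in_torus: "phi y \<in> torus"
  unfolding phi_def torus_def by (simp add: frac_lt_1)

lemma tdist_eq_0_imp_eq:
  assumes "x \<in> torus" "y \<in> torus" "tdist x y \<le> 0"
  shows "x = y"
proof -
  have diff: "x - y = of_int (round (x - y))"
    using assms(3) tdist_nonneg[of x y] unfolding tdist_def by simp
  have "\<bar>x - y\<bar> < 1"
    using assms(1,2) unfolding torus_def by auto
  with diff have "\<bar>of_int (round (x - y)) :: real\<bar> < 1"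
    by simp
  then have "round (x - y) = 0"
    by linarith
  with diff show ?thesis by simp
qed

section \<open>Dyadic points of finite and infinite binary words\<close>

definition dyadic :: "word \<Rightarrow> real" where
  "dyadic u = (\<Sum>j<length u. of_bool (u ! j) * (1/2) ^ (j + 1))"

lemma xw_eq_phi_dyadic: "xw u = phi (dyadic u)"
  unfolding xw_def dyadic_def ..

lemma half_power_tail_sum:
  "k \<le> n \<Longrightarrow> (\<Sum>j\<in>{k..<n}. (1/2::real) ^ (j + 1)) = (1/2)^k - (1/2)^n"
proof (induction n)
  case (Suc n)
  then show ?case
    by (cases "k = Suc n") (simp_all add: sum.atLeastLessThan_Suc)
qed simp

lemma dyadic_take_bounds:
  assumes "k \<le> length u"
  shows "0 \<le> dyadic u - dyadic (take k u)" "dyadic u - dyadic (take k u) \<le> (1/2)^k"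
proof -
  define d where "d j = of_bool (u ! j) * (1/2::real) ^ (j + 1)" for j
  have "dyadic u = (\<Sum>j<k. d j) + (\<Sum>j\<in>{k..<length u}. d j)"
    unfolding dyadic_def d_def lessThan_atLeast0 using assms
    by (simp add: sum.atLeastLessThan_concat)
  moreover have "dyadic (take k u) = (\<Sum>j<k. d j)"
    unfolding dyadic_def d_def using assms by (simp add: min_absorb2)
  ultimately have tail: "dyadic u - dyadic (take k u) = (\<Sum>j\<in>{k..<length u}. d j)"
    by simp
  show "0 \<le> dyadic u - dyadic (take k u)"
    unfolding tail d_def by (intro sum_nonneg) simp
  have "(\<Sum>j\<in>{k..<length u}. d j) \<le> (\<Sum>j\<in>{k..<length u}. (1/2::real) ^ (j + 1))"
    unfolding d_def by (intro sum_mono) simp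
  also have "\<dots> \<le> (1/2)^k"
    using half_power_tail_sum[OF assms] by simp
  finally show "dyadic u - dyadic (take k u) \<le> (1/2)^k"
    unfolding tail .
qed

lemma xdot_prefix_bounds:
  shows "0 \<le> xdot z - dyadic (map z [0..<k])" "xdot z - dyadic (map z [0..<k]) \<le> (1/2)^k"
proof -
  define d where "d j = of_bool (z j) * (1/2::real) ^ (j + 1)" for j
  have summable_d: "summable d"
    unfolding d_def by (rule summable_comparison_test[of _ "\<lambda>j. (1/2::real) ^ (j + 1)"]) auto
  have "xdot z = (\<Sum>j. d (j + k)) + (\<Sum>j<k. d j)"
    unfolding xdot_def d_def[symmetric] using suminf_split_initial_segment[OF summable_d, of k]
    by simp
  moreover have "dyadic (map z [0..<k]) = (\<Sum>j<k. d j)"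
    unfolding dyadic_def d_def by simp
  ultimately have tail: "xdot z - dyadic (map z [0..<k]) = (\<Sum>j. d (j + k))"
    by simp
  have summable_tail: "summable (\<lambda>j. d (j + k))"
    using summable_d by (simp add: summable_iff_shift)
  show "0 \<le> xdot z - dyadic (map z [0..<k])"
    unfolding tail by (rule suminf_nonneg[OF summable_tail]) (simp add: d_def)
  have geometric: "(\<lambda>j. (1/2::real)^(k+1) * (1/2)^j) sums ((1/2)^(k+1) * 2)"
    by (rule sums_mult) (use geometric_sums[of "1/2::real"] in simp)
  have "(\<Sum>j. d (j + k)) \<le> (\<Sum>j. (1/2::real)^(k+1) * (1/2)^j)"
    using summable_tail sums_summable[OF geometric]
    by (intro suminf_le) (auto simp: d_def power_add mult.commute)
  also have "\<dots> = (1/2)^k"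
    using sums_unique[OF geometric] by simp
  finally show "xdot z - dyadic (map z [0..<k]) \<le> (1/2)^k"
    unfolding tail .
qed

lemma tdist_xw_take:
  assumes "k \<le> length u"
  shows "tdist x (xw (take k u)) \<le> tdist x (xw u) + (1/2)^k"
proof -
  have "tdist x (xw (take k u)) \<le> tdist x (dyadic u) + tdist (dyadic u) (dyadic (take k u))"
    unfolding xw_eq_phi_dyadic tdist_phi_right by (rule tdist_triangle)
  also have "tdist (dyadic u) (dyadic (take k u)) \<le> (1/2)^k"
    using tdist_le_abs[of "dyadic u" "dyadic (take k u)"] dyadic_take_bounds[OF assms] by simp
  finally show ?thesis
    unfolding xw_eq_phi_dyadic tdist_phi_right by simp
qed

lemma tdist_xdot_prefix:
  assumes "take k u = map z [0..<k]" "k \<le> length u"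
  shows "tdist x (phi (xdot z)) \<le> tdist x (xw u) + 2 * (1/2)^k"
proof -
  have "tdist x (xdot z) \<le> tdist x (dyadic u) + tdist (dyadic u) (xdot z)"
    by (rule tdist_triangle)
  also have "tdist (dyadic u) (xdot z) \<le> 2 * (1/2)^k"
    using tdist_le_abs[of "dyadic u" "xdot z"] dyadic_take_bounds[OF assms(2)]
      xdot_prefix_bounds[of z k] assms(1) by simp
  finally show ?thesis
    unfolding xw_eq_phi_dyadic tdist_phi_right by simp
qed

definition rad :: "real \<Rightarrow> nat \<Rightarrow> real" where
  "rad c n = 2 powr (- (c * real n))"

lemma half_power_eq_powr: "(1/2::real)^n = 2 powr (- real n)"
  by (simp add: powr_minus powr_realpow power_one_over inverse_eq_divide)

lemma Lset_rad:
  "Lset A h \<alpha> = {x \<in> torus. infinite {u \<in> A. tdist x (xw u) < rad (h / \<alpha>) (length u)}}"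
  unfolding Lset_def rad_def by simp

lemma rad_antimono: "0 \<le> c \<Longrightarrow> m \<le> n \<Longrightarrow> rad c n \<le> rad c m"
  unfolding rad_def by (intro powr_mono) (auto intro: mult_left_mono)

lemma rad_as_power: "rad c n = (2 powr (- c)) ^ n"
  unfolding rad_def by (subst powr_realpow[symmetric]) (simp_all add: powr_powr)

lemma half_power_lt_rad:
  assumes "c < 1" "1 \<le> n"
  shows "(1/2::real)^n < rad c n"
proof -
  have "(1/2::real)^n = 2 powr (- real n)"
    by (rule half_power_eq_powr)
  also have "\<dots> < rad c n"
    unfolding rad_def using assms by (intro powr_less_mono) auto
  finally show ?thesis .
qed

lemma rad_tendsto_0: "0 < c \<Longrightarrow> rad c \<longlonglongrightarrow> 0"
  unfolding rad_as_power[abs_def]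
  by (intro LIMSEQ_abs_realpow_zero2) (simp add: powr_less_one)

text \<open>For 0 < c < 1 the radius eventually absorbs the truncation error 2^(-n):
  r(n+1) + 2^(-n) = r(n) (2^(-c) + 2^(-(1-c)n)), and the bracket tends to 2^(-c) < 1.\<close>

lemma rad_absorbs_truncation:
  assumes "0 < c" "c < 1"
  shows "eventually (\<lambda>n. rad c (n + 1) + (1/2)^n \<le> rad c n) sequentially"
proof -
  have "(\<lambda>n. 2 powr (- c) + rad (1 - c) n) \<longlonglongrightarrow> 2 powr (- c) + 0"
    using assms by (intro tendsto_add tendsto_const rad_tendsto_0) simp
  moreover have "2 powr (- c) + 0 < (1::real)"
    using assms by (simp add: powr_less_one)
  ultimately have "eventually (\<lambda>n. 2 powr (- c) + rad (1 - c) n < 1) sequentially"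
    by (rule order_tendstoD)
  then show ?thesis
  proof (rule eventually_mono)
    fix n assume "2 powr (- c) + rad (1 - c) n < 1"
    then have "rad c n * (2 powr (- c) + rad (1 - c) n) \<le> rad c n * 1"
      by (intro mult_left_mono) (auto simp: rad_def)
    moreover have "rad c n * 2 powr (- c) = rad c (n + 1)"
      unfolding rad_def by (simp add: powr_add[symmetric] algebra_simps)
    moreover have "rad c n * rad (1 - c) n = (1/2)^n"
      unfolding rad_def half_power_eq_powr by (simp add: powr_add[symmetric] algebra_simps)
    ultimately show "rad c (n + 1) + (1/2)^n \<le> rad c n"
      by (simp add: distrib_left)
  qed
qed

section \<open>Koenig's lemma for binary words\<close>

definition extensions :: "word set \<Rightarrow> word \<Rightarrow> word set" where
  "extensions V w = {u \<in> V. take (length w) u = w}"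

text \<open>The branch is built greedily: extend by False if infinitely many words of V
  still extend the result, otherwise by True; the split lemma shows this keeps
  infinitely many extensions at every stage.\<close>

fun infinite_path :: "word set \<Rightarrow> nat \<Rightarrow> word" where
  "infinite_path V 0 = []"
| "infinite_path V (Suc n) =
     (if infinite (extensions V (infinite_path V n @ [False]))
      then infinite_path V n @ [False] else infinite_path V n @ [True])"

lemma extensions_split:
  "extensions V w \<subseteq> {w} \<union> extensions V (w @ [False]) \<union> extensions V (w @ [True])"
proof
  fix u assume u: "u \<in> extensions V w"
  show "u \<in> {w} \<union> extensions V (w @ [False]) \<union> extensions V (w @ [True])"
  proof (cases "length u \<le> length w")
    case True
    then show ?thesis using u unfolding extensions_def by auto
  next
    case False
    then have "take (length (w @ [u ! length w])) u = w @ [u ! length w]"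
      using u unfolding extensions_def by (simp add: take_Suc_conv_app_nth)
    then show ?thesis
      using u unfolding extensions_def by (cases "u ! length w") auto
  qed
qed

lemma length_infinite_path: "length (infinite_path V n) = n"
  by (induction n) auto

lemma infinite_extensions_path:
  "infinite V \<Longrightarrow> infinite (extensions V (infinite_path V n))"
proof (induction n)
  case 0
  then show ?case by (simp add: extensions_def)
next
  case (Suc n)
  let ?w = "infinite_path V n"
  have "infinite ({?w} \<union> extensions V (?w @ [False]) \<union> extensions V (?w @ [True]))"
    using Suc finite_subset[OF extensions_split] by blast
  then show ?case by auto
qed

lemma infinite_path_letters: "map (\<lambda>i. infinite_path V (Suc i) ! i) [0..<n] = infinite_path V n"
proof (induction n)
  case (Suc n)
  have "infinite_path V (Suc n) = infinite_path V n @ [infinite_path V (Suc n) ! n]"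
    using length_infinite_path[of V n] by (auto simp: nth_append)
  then show ?case using Suc by simp
qed simp

lemma koenig_binary:
  assumes "infinite (V :: word set)"
  obtains z where "\<And>n. infinite {u \<in> V. take n u = map z [0..<n]}"
proof
  fix n
  show "infinite {u \<in> V. take n u = map (\<lambda>i. infinite_path V (Suc i) ! i) [0..<n]}"
    using infinite_extensions_path[OF assms, of n]
    unfolding infinite_path_letters extensions_def length_infinite_path .
qed

lemma tau_take:
  assumes "u \<in> tau X v" "length v \<le> j" "j \<le> length u"
  shows "take j u \<in> tau X v"
  using assms unfolding tau_def by (auto simp: min_absorb1)

lemma tau_imp_X:
  assumes "u \<in> tau X v"
  shows "X u"
proof -
  have "X (take (length u) u)"
    using assms unfolding tau_def by auto
  then show ?thesis by simp
qed

lemma close_branch_in_Theta: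
  assumes c: "0 < c" and x: "x \<in> torus"
    and V: "infinite V" "V \<subseteq> tau X v"
    and close: "\<And>u. u \<in> V \<Longrightarrow> tdist x (xw u) < rad c (length u)"
  shows "x \<in> Theta X"
proof -
  obtain z where z: "\<And>n. infinite {u \<in> V. take n u = map z [0..<n]}"
    using koenig_binary[OF V(1)] by blast
  have prefix_witness: "\<exists>u\<in>V. take n u = map z [0..<n] \<and> n \<le> length u" for n
  proof -
    obtain u where u: "u \<in> V" "take n u = map z [0..<n]"
      using infinite_imp_nonempty[OF z[of n]] by blast
    have "length (take n u) = n"
      unfolding u(2) by simp
    then have "n \<le> length u"
      by (simp add: min_def split: if_splits)
    with u show ?thesis by blast
  qed
  have branch: "z \<in> boundary_tau X v"
    unfolding boundary_tau_def
  proof (intro CollectI allI impI)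
    fix j assume j: "length v \<le> j"
    obtain u where u: "u \<in> V" "take j u = map z [0..<j]" "j \<le> length u"
      using prefix_witness by blast
    have "take j u \<in> tau X v"
      using tau_take[OF subsetD[OF V(2) u(1)] j u(3)] .
    then show "map z [0..<j] \<in> tau X v"
      unfolding u(2) .
  qed
  have bound: "tdist x (phi (xdot z)) \<le> rad c n + 2 * (1/2)^n" for n
  proof -
    obtain u where u: "u \<in> V" "take n u = map z [0..<n]" "n \<le> length u"
      using prefix_witness by blast
    have "tdist x (phi (xdot z)) \<le> tdist x (xw u) + 2 * (1/2)^n"
      using tdist_xdot_prefix[OF u(2,3)] .
    also have "tdist x (xw u) \<le> rad c n"
      using close[OF u(1)] rad_antimono[OF _ u(3), of c] c by simp
    finally show ?thesis by simp
  qed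
  have "(\<lambda>n. rad c n + 2 * (1/2::real)^n) \<longlonglongrightarrow> 0 + 2 * 0"
    by (intro tendsto_intros rad_tendsto_0[OF c]) simp
  then have "tdist x (phi (xdot z)) \<le> 0 + 2 * 0"
    using bound by (intro LIMSEQ_le_const) auto
  then have "x = phi (xdot z)"
    using tdist_eq_0_imp_eq[OF x phi_in_torus] by simp
  with branch show ?thesis
    unfolding Theta_def by blast
qed

section \<open>Stems\<close>

definition stem_len :: "(word \<Rightarrow> bool) \<Rightarrow> word \<Rightarrow> nat" where
  "stem_len X u = (LEAST k. k \<le> length u \<and> (\<forall>j. k \<le> j \<and> j \<le> length u \<longrightarrow> X (take j u)))"

definition stem :: "(word \<Rightarrow> bool) \<Rightarrow> word \<Rightarrow> word" where
  "stem X u = take (stem_len X u) u"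

lemma stem_len_spec:
  assumes "X u"
  shows "stem_len X u \<le> length u"
    and "\<And>j. stem_len X u \<le> j \<Longrightarrow> j \<le> length u \<Longrightarrow> X (take j u)"
proof -
  have "length u \<le> length u \<and> (\<forall>j. length u \<le> j \<and> j \<le> length u \<longrightarrow> X (take j u))"
    using assms by (auto simp del: take_all_iff)
  then have "stem_len X u \<le> length u \<and>
      (\<forall>j. stem_len X u \<le> j \<and> j \<le> length u \<longrightarrow> X (take j u))"
    unfolding stem_len_def by (rule LeastI)
  then show "stem_len X u \<le> length u"
    and "\<And>j. stem_len X u \<le> j \<Longrightarrow> j \<le> length u \<Longrightarrow> X (take j u)"
    by blast+
qed

lemma length_stem: "X u \<Longrightarrow> length (stem X u) = stem_len X u"
  unfolding stem_def using stem_len_spec(1)[of X u] by (simp add: min_absorb2)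

lemma in_tau_stem:
  assumes "X u"
  shows "u \<in> tau X (stem X u)"
  unfolding tau_def mem_Collect_eq length_stem[of X u, OF assms]
  using stem_len_spec[of X u, OF assms] by (simp add: stem_def)

lemma stem_in_Stilde:
  assumes "X u" "0 < stem_len X u"
  shows "stem X u \<in> Stilde X"
proof -
  let ?k = "stem_len X u"
  note spec = stem_len_spec[of X u, OF assms(1)]
  have "\<not> X (take (?k - 1) u)"
  proof
    assume prev: "X (take (?k - 1) u)"
    have "?k - 1 \<le> length u \<and> (\<forall>j. ?k - 1 \<le> j \<and> j \<le> length u \<longrightarrow> X (take j u))"
    proof (intro conjI allI impI)
      show "?k - 1 \<le> length u"
        using spec(1) by simp
      fix j assume "?k - 1 \<le> j \<and> j \<le> length u"
      then consider "j = ?k - 1" | "?k \<le> j" "j \<le> length u"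
        by linarith
      then show "X (take j u)"
        using prev spec(2) by cases auto
    qed
    then have "?k \<le> ?k - 1"
      unfolding stem_len_def by (rule Least_le)
    with assms(2) show False by simp
  qed
  moreover have "parent (stem X u) = take (?k - 1) u"
    unfolding parent_def stem_def using spec(1) by (simp add: butlast_take)
  moreover have "X (stem X u)"
    unfolding stem_def using spec by simp
  moreover have "stem X u \<noteq> []"
    using assms(2) length_stem[of X u, OF assms(1)] by auto
  ultimately show ?thesis
    unfolding Stilde_def by simp
qed

lemma many_stems_in_Ltilde:
  assumes c: "0 < c" "c < 1" and x: "x \<in> torus"
    and U: "U \<subseteq> Sset X" "infinite (stem X ` U)"
    and close: "\<And>u. u \<in> U \<Longrightarrow> tdist x (xw u) < rad c (length u)"
  shows "infinite {v \<in> Stilde X. tdist x (xw v) < rad c (length v)}"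
proof -
  obtain N where N: "\<And>n. N \<le> n \<Longrightarrow> rad c (n + 1) + (1/2)^n \<le> rad c n"
    using rad_absorbs_truncation[OF c] unfolding eventually_sequentially by blast
  define long_stems where "long_stems = {v \<in> stem X ` U. Suc N \<le> length v}"
  have "stem X ` U \<subseteq> long_stems \<union> {v. set v \<subseteq> UNIV \<and> length v \<le> N}"
    unfolding long_stems_def by auto
  moreover have "finite {v :: word. set v \<subseteq> UNIV \<and> length v \<le> N}"
    by (rule finite_lists_length_le) simp
  ultimately have "infinite long_stems"
    using U(2) finite_subset by blast
  moreover have "long_stems \<subseteq> {v \<in> Stilde X. tdist x (xw v) < rad c (length v)}"
  proof
    fix v assume "v \<in> long_stems"
    then obtain u where u: "u \<in> U" "v = stem X u" and long: "Suc N \<le> length v"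
      unfolding long_stems_def by blast
    have "X u"
      using u(1) U(1) by (auto simp: Sset_def)
    let ?k = "stem_len X u"
    have "tdist x (xw v) < rad c ?k"
    proof (cases "?k = length u")
      case True
      then show ?thesis using close[OF u(1)] u(2) by (simp add: stem_def)
    next
      case False
      then have longer: "?k + 1 \<le> length u"
        using stem_len_spec(1)[of X u, OF \<open>X u\<close>] by simp
      have "tdist x (xw v) \<le> tdist x (xw u) + (1/2)^?k"
        unfolding u(2) stem_def using tdist_xw_take stem_len_spec(1)[of X u, OF \<open>X u\<close>] by blast
      also have "\<dots> < rad c (?k + 1) + (1/2)^?k"
        using close[OF u(1)] rad_antimono[OF _ longer, of c] c by simp
      also have "\<dots> \<le> rad c ?k"
        using N long length_stem[of X u, OF \<open>X u\<close>] u(2) by simp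
      finally show ?thesis .
    qed
    then show "v \<in> {v \<in> Stilde X. tdist x (xw v) < rad c (length v)}"
      using stem_in_Stilde[of X u, OF \<open>X u\<close>] u long length_stem[of X u, OF \<open>X u\<close>] by auto
  qed
  ultimately show ?thesis
    using finite_subset by blast
qed

lemma Ltilde_subset_L: "Ltilde_alpha X h \<alpha> \<subseteq> L_alpha X h \<alpha>"
proof -
  have "Stilde X \<subseteq> Sset X"
    unfolding Stilde_def Sset_def by auto
  then show ?thesis
    unfolding Ltilde_alpha_def L_alpha_def Lset_def
    by (auto elim!: infinite_super[rotated])
qed

text \<open>Every long prefix of a branch of some tau_u lies in S and approximates the branch
  to within 2^(-n) < rad c n.\<close>

lemma Theta_subset_L:
  assumes "0 < h" "h < \<alpha>"
  shows "Theta X \<subseteq> L_alpha X h \<alpha>"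
proof
  fix x assume "x \<in> Theta X"
  then obtain u z where x: "x = phi (xdot z)" and z: "z \<in> boundary_tau X u"
    unfolding Theta_def by auto
  let ?c = "h / \<alpha>"
  let ?prefix = "\<lambda>j. map z [0..<j]"
  have "inj_on ?prefix {Suc (length u)..}"
    by (rule inj_onI) (drule arg_cong[where f = length], simp)
  then have "infinite (?prefix ` {Suc (length u)..})"
    using infinite_Ici finite_imageD by blast
  moreover have "?prefix ` {Suc (length u)..} \<subseteq>
      {w \<in> Sset X. tdist x (xw w) < rad ?c (length w)}"
  proof
    fix w assume "w \<in> ?prefix ` {Suc (length u)..}"
    then obtain j where j: "Suc (length u) \<le> j" and w: "w = ?prefix j"
      by auto
    have "w \<in> tau X u"
      using z j unfolding boundary_tau_def w by simp
    then have "X w"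
      by (rule tau_imp_X)
    have "tdist x (xw w) \<le> \<bar>xdot z - dyadic w\<bar>"
      unfolding x xw_eq_phi_dyadic tdist_phi_left tdist_phi_right by (rule tdist_le_abs)
    also have "\<dots> \<le> (1/2)^j"
      using xdot_prefix_bounds[of z j] w by simp
    also have "\<dots> < rad ?c j"
      using half_power_lt_rad[of ?c j] assms j by simp
    finally show "w \<in> {w \<in> Sset X. tdist x (xw w) < rad ?c (length w)}"
      using \<open>X w\<close> w unfolding Sset_def by simp
  qed
  ultimately have "infinite {w \<in> Sset X. tdist x (xw w) < rad ?c (length w)}"
    using finite_subset by blast
  then show "x \<in> L_alpha X h \<alpha>"
    unfolding L_alpha_def Lset_rad x by (simp add: phi_in_torus)
qed

text \<open>Split the words close to x according to their stems: infinitely many stems put x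
  into Ltilde, a single stem carrying infinitely many words puts x into Theta.\<close>

lemma L_subset_Ltilde_Theta:
  assumes "0 < h" "h < \<alpha>"
  shows "L_alpha X h \<alpha> \<subseteq> Ltilde_alpha X h \<alpha> \<union> Theta X"
proof
  fix x assume "x \<in> L_alpha X h \<alpha>"
  let ?c = "h / \<alpha>"
  define U where "U = {u \<in> Sset X. tdist x (xw u) < rad ?c (length u)}"
  have x: "x \<in> torus" and infU: "infinite U"
    using \<open>x \<in> L_alpha X h \<alpha>\<close> unfolding L_alpha_def Lset_rad U_def by auto
  have c: "0 < ?c" "?c < 1"
    using assms by auto
  have close: "\<And>u. u \<in> U \<Longrightarrow> tdist x (xw u) < rad ?c (length u)"
    and U_S: "U \<subseteq> Sset X"
    unfolding U_def by auto
  show "x \<in> Ltilde_alpha X h \<alpha> \<union> Theta X"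
  proof (cases "finite (stem X ` U)")
    case False
    then show ?thesis
      using many_stems_in_Ltilde[OF c x U_S False close] x
      unfolding Ltilde_alpha_def Lset_rad by simp
  next
    case True
    have "infinite (\<Union>v\<in>stem X ` U. {u \<in> U. stem X u = v})"
      by (rule infinite_super[OF _ infU]) auto
    then obtain v where "infinite {u \<in> U. stem X u = v}"
      using finite_UN[OF True] by blast
    moreover have "{u \<in> U. stem X u = v} \<subseteq> tau X v"
      using U_S in_tau_stem by (auto simp: Sset_def)
    ultimately have "x \<in> Theta X"
      by (rule close_branch_in_Theta[OF c(1) x]) (simp add: close)
    then show ?thesis by simp
  qed
qed

theorem mainTheorem8:
  fixes X :: "bool list \<Rightarrow> bool" and h \<alpha> :: real
  assumes "h > 0" and "\<alpha> > h"
  shows "L_alpha X h \<alpha> = Ltilde_alpha X h \<alpha> \<union> Theta X"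
  using L_subset_Ltilde_Theta[OF assms] Ltilde_subset_L[of X h \<alpha>] Theta_subset_L[OF assms, of X]
  by blast

end
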